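(* Let $P$ be a convex polygon with no two edges parallel. Let $Q=A_0A_1A_2A_3$ be an LMAP in $P$ with $A_0,A_1,A_2,A_3$ in clockwise order, and suppose $A_3$ lies in edge $e_i$ and $A_1$ lies in edge $e_j$, where $e_i\prec e_j$. Then $A_0$ lies on a vertex of $P$.
   Context: $P$ is a compact convex polygon with edges $e_1,\ldots,e_n$ in clockwise order and vertices $v_1,\ldots,v_n$, $e_i$ being the open segment (excluding endpoints) from $v_i$ to $v_{i+1}$ (indices mod $n$); "lies in $e_i$" means lies in this open segment. $\ell_i$ is the line containing $e_i$, $\mathsf{I}_{i,j}=\ell_i\cap\ell_j$. For distinct edges, $e_i\prec e_j$ means $\mathsf{I}_{i,j}=v_i+t(v_{i+1}-v_i)$ for some $t\ge1$ (equivalently the clockwise turning angle from direction $v_{i+1}-v_i$ to $v_{j+1}-v_j$ is in $(0,\pi)$). A parallelogram lies in $P$ if its corners lie in $P$. A parallelogram $A_0A_1A_2A_3$ lying in $P$ is locally maximal if there is $\delta>0$ such that every parallelogram $B_0B_1B_2B_3$ lying in $P$ with $|A_iB_i|<\delta$ for all $i$ has area at most that of $A_0A_1A_2A_3$; it is slidable if two corners lie in the same open edge of $P$. An LMAP is a locally maximal non-slidable parallelogram lying in $P$. *)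

theory Defs
  imports "HOL-Analysis.Analysis"
begin

type_synonym pt = "real^2"

definition cross :: "pt \<Rightarrow> pt \<Rightarrow> real" where
  "cross a b = a$1 * b$2 - a$2 * b$1"

text \<open>A compact convex polygon given by its n vertices v 0, ..., v (n-1) (indices mod n)
  in clockwise order: every other vertex lies strictly to the right of each directed edge.\<close>
definition nxt :: "nat \<Rightarrow> nat \<Rightarrow> nat" where
  "nxt n i = Suc i mod n"

definition convex_polygon_cw :: "nat \<Rightarrow> (nat \<Rightarrow> pt) \<Rightarrow> bool" where
  "convex_polygon_cw n v \<longleftrightarrow> n \<ge> 3 \<and>
     (\<forall>i<n. \<forall>k<n. k \<noteq> i \<and> k \<noteq> nxt n i \<longrightarrow>
        cross (v (nxt n i) - v i) (v k - v i) < 0)"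

definition polygon :: "nat \<Rightarrow> (nat \<Rightarrow> pt) \<Rightarrow> pt set" where
  "polygon n v = convex hull (v ` {..<n})"

definition edge :: "nat \<Rightarrow> (nat \<Rightarrow> pt) \<Rightarrow> nat \<Rightarrow> pt set" where
  "edge n v i = open_segment (v i) (v (nxt n i))"

definition no_parallel_edges :: "nat \<Rightarrow> (nat \<Rightarrow> pt) \<Rightarrow> bool" where
  "no_parallel_edges n v \<longleftrightarrow> (\<forall>i<n. \<forall>j<n. i \<noteq> j \<longrightarrow>
      cross (v (nxt n i) - v i) (v (nxt n j) - v j) \<noteq> 0)"

text \<open>e_i \<prec> e_j: the intersection of lines l_i and l_j is v_i + t (v_{i+1} - v_i) with t \<ge> 1.\<close>
definition edge_prec :: "nat \<Rightarrow> (nat \<Rightarrow> pt) \<Rightarrow> nat \<Rightarrow> nat \<Rightarrow> bool" where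
  "edge_prec n v i j \<longleftrightarrow> i \<noteq> j \<and>
     (\<exists>t s. t \<ge> 1 \<and> v i + t *\<^sub>R (v (nxt n i) - v i) = v j + s *\<^sub>R (v (nxt n j) - v j))"

definition is_parallelogram :: "pt \<Rightarrow> pt \<Rightarrow> pt \<Rightarrow> pt \<Rightarrow> bool" where
  "is_parallelogram A0 A1 A2 A3 \<longleftrightarrow> A0 + A2 = A1 + A3"

definition para_area :: "pt \<Rightarrow> pt \<Rightarrow> pt \<Rightarrow> pt \<Rightarrow> real" where
  "para_area A0 A1 A2 A3 = \<bar>cross (A1 - A0) (A3 - A0)\<bar>"

definition para_in :: "pt set \<Rightarrow> pt \<Rightarrow> pt \<Rightarrow> pt \<Rightarrow> pt \<Rightarrow> bool" where
  "para_in P A0 A1 A2 A3 \<longleftrightarrow> is_parallelogram A0 A1 A2 A3 \<and>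
     A0 \<in> P \<and> A1 \<in> P \<and> A2 \<in> P \<and> A3 \<in> P"

definition locally_maximal :: "pt set \<Rightarrow> pt \<Rightarrow> pt \<Rightarrow> pt \<Rightarrow> pt \<Rightarrow> bool" where
  "locally_maximal P A0 A1 A2 A3 \<longleftrightarrow> para_in P A0 A1 A2 A3 \<and>
     (\<exists>\<delta>>0. \<forall>B0 B1 B2 B3. para_in P B0 B1 B2 B3 \<and>
        dist A0 B0 < \<delta> \<and> dist A1 B1 < \<delta> \<and> dist A2 B2 < \<delta> \<and> dist A3 B3 < \<delta> \<longrightarrow>
        para_area B0 B1 B2 B3 \<le> para_area A0 A1 A2 A3)"

definition slidable :: "nat \<Rightarrow> (nat \<Rightarrow> pt) \<Rightarrow> pt \<Rightarrow> pt \<Rightarrow> pt \<Rightarrow> pt \<Rightarrow> bool" where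
  "slidable n v A0 A1 A2 A3 \<longleftrightarrow>
     (let A = (\<lambda>k::nat. [A0, A1, A2, A3] ! k) in
      \<exists>i<n. \<exists>a<4. \<exists>b<4. a \<noteq> b \<and> A a \<in> edge n v i \<and> A b \<in> edge n v i)"

definition LMAP :: "nat \<Rightarrow> (nat \<Rightarrow> pt) \<Rightarrow> pt \<Rightarrow> pt \<Rightarrow> pt \<Rightarrow> pt \<Rightarrow> bool" where
  "LMAP n v A0 A1 A2 A3 \<longleftrightarrow> locally_maximal (polygon n v) A0 A1 A2 A3 \<and>
     \<not> slidable n v A0 A1 A2 A3"

text \<open>A0 A1 A2 A3 in clockwise order (negative orientation, y-axis up).\<close>
definition clockwise4 :: "pt \<Rightarrow> pt \<Rightarrow> pt \<Rightarrow> pt \<Rightarrow> bool" where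
  "clockwise4 A0 A1 A2 A3 \<longleftrightarrow> cross (A1 - A0) (A2 - A1) < 0 \<and> cross (A2 - A1) (A3 - A2) < 0 \<and>
     cross (A3 - A2) (A0 - A3) < 0 \<and> cross (A0 - A3) (A1 - A0) < 0"

end

theory Submission imports Defs begin

text \<open>Suppose A0 is not a vertex. Non-slidability keeps A0 off the edges e_i and e_j, so A0 lies
  strictly inside both half-planes, and being no extreme point of P it can move both ways along some
  direction w. Write w = p d_j + q d_i with the edge directions d_i, d_j (independent since the edges
  are not parallel). Moving A0 by l w, A1 by l p d_j along e_j, A3 by l q d_i along e_i and fixing A2
  keeps a parallelogram in P, and its area grows by l L - l^2 M, where L is linear in (p, q) with the
  strict half-plane inequalities as coefficients and M = p q (d_i \<times> d_j). The relation
  e_i \<prec> e_j makes d_i \<times> d_j negative, so L = 0 forces M < 0; either way some arbitrarily small l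
  increases the area, contradicting local maximality.\<close>

subsection \<open>The cross product\<close>

lemma cross_skew: "cross a b = - cross b a"
  unfolding cross_def by simp

lemma cross_diff_scaleR: "cross (a - s *\<^sub>R c) (b - t *\<^sub>R d) =
    cross a b - t * cross a d - s * cross c b + s * t * cross c d"
  unfolding cross_def by (simp add: algebra_simps)

lemma cross_affine_comb:
  assumes "u + w = 1"
  shows "cross d (u *\<^sub>R x + w *\<^sub>R y - a) = u * cross d (x - a) + w * cross d (y - a)"
proof -
  have "w = 1 - u" using assms by simp
  then show ?thesis unfolding cross_def by simp (simp add: algebra_simps)
qed

lemma cross_basis_coordinates:
  assumes "cross a b \<noteq> 0"
  obtains p q where "w = p *\<^sub>R a + q *\<^sub>R b"
proof
  have "w $ k * cross a b = cross w b * a $ k + cross a w * b $ k" if "k = 1 \<or> k = 2" for k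
    using that unfolding cross_def by (auto simp: algebra_simps)
  then show "w = (cross w b / cross a b) *\<^sub>R a + (cross a w / cross a b) *\<^sub>R b"
    using assms by (simp add: vec_eq_iff forall_2 field_simps)
qed

lemma cross_closed_segment_eq_0:
  assumes "x \<in> closed_segment a b"
  shows "cross (b - a) (x - a) = 0"
proof -
  obtain u where "x = (1 - u) *\<^sub>R a + u *\<^sub>R b"
    using assms unfolding in_segment by blast
  then show ?thesis unfolding cross_def by simp (simp add: algebra_simps)
qed

lemma cross_closed_segment:
  "x \<in> closed_segment a b \<Longrightarrow> cross (x - y) (b - a) = cross (b - a) (y - a)"
  using cross_closed_segment_eq_0[of x a b] unfolding cross_def by (simp add: algebra_simps)

subsection \<open>Edge half-planes of a convex polygon\<close>

lemma convex_halfplane_Un_closed_segment: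
  "convex ({y. cross (b - a) (y - a) < 0} \<union> closed_segment a b)" (is "convex ?T")
  unfolding convex_def
proof (intro ballI allI impI)
  fix y z :: pt and u w :: real
  assume y: "y \<in> ?T" and z: "z \<in> ?T" and uw: "0 \<le> u" "0 \<le> w" "u + w = 1"
  consider "y \<in> closed_segment a b" "z \<in> closed_segment a b" | "u = 0" | "w = 0"
    | "cross (b - a) (y - a) < 0 \<or> cross (b - a) (z - a) < 0" "0 < u" "0 < w"
    using y z uw by fastforce
  then show "u *\<^sub>R y + w *\<^sub>R z \<in> ?T"
  proof cases
    case 1
    then show ?thesis using convexD[OF convex_closed_segment] uw by blast
  next
    case 2
    then show ?thesis using z uw by simp
  next
    case 3
    then show ?thesis using y uw by simp
  next
    case 4
    have "cross (b - a) (y - a) \<le> 0" "cross (b - a) (z - a) \<le> 0"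
      using y z cross_closed_segment_eq_0 by fastforce+
    with 4 have "u * cross (b - a) (y - a) + w * cross (b - a) (z - a) < 0"
      by (smt (verit) mult_pos_neg mult_nonneg_nonpos)
    then show ?thesis by (simp add: cross_affine_comb[OF uw(3)])
  qed
qed

lemma polygon_subset_edge_halfplane:
  assumes "convex_polygon_cw n v" and "k < n"
  shows "polygon n v \<subseteq>
    {y. cross (v (nxt n k) - v k) (y - v k) < 0} \<union> closed_segment (v k) (v (nxt n k))"
  unfolding polygon_def
proof (intro hull_minimal convex_halfplane_Un_closed_segment)
  show "v ` {..<n} \<subseteq> {y. cross (v (nxt n k) - v k) (y - v k) < 0} \<union> closed_segment (v k) (v (nxt n k))"
    using assms unfolding convex_polygon_cw_def by auto
qed

lemma polygon_cross_edge_le: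
  assumes "convex_polygon_cw n v" and "k < n" and "x \<in> polygon n v"
  shows "cross (v (nxt n k) - v k) (x - v k) \<le> 0"
  using polygon_subset_edge_halfplane[OF assms(1,2)] assms(3) cross_closed_segment_eq_0 by fastforce

lemma nxt_less: "convex_polygon_cw n v \<Longrightarrow> nxt n k < n"
  unfolding convex_polygon_cw_def nxt_def by simp

lemma closed_segment_edge_subset_polygon:
  assumes "convex_polygon_cw n v" and "k < n"
  shows "closed_segment (v k) (v (nxt n k)) \<subseteq> polygon n v"
  using assms nxt_less[OF assms(1)] unfolding polygon_def by (simp add: closed_segment_subset hull_inc)

lemma polygon_cross_edge_less:
  assumes "convex_polygon_cw n v" and "k < n" and "x \<in> polygon n v"
    and "x \<notin> edge n v k" and "x \<notin> v ` {..<n}"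
  shows "cross (v (nxt n k) - v k) (x - v k) < 0"
proof -
  have "x \<notin> closed_segment (v k) (v (nxt n k))"
    using assms(2,4,5) nxt_less[OF assms(1)] unfolding edge_def open_segment_def by blast
  then show ?thesis
    using polygon_subset_edge_halfplane[OF assms(1,2)] assms(3) by blast
qed

lemma polygon_cross_edge_point_less:
  assumes "convex_polygon_cw n v" and "k < n" and "x \<in> polygon n v"
    and "x \<notin> edge n v k" and "x \<notin> v ` {..<n}" and "y \<in> edge n v k"
  shows "cross (y - x) (v (nxt n k) - v k) < 0"
proof -
  have "y \<in> closed_segment (v k) (v (nxt n k))"
    using assms(6) segment_open_subset_closed unfolding edge_def by blast
  then show ?thesis
    using polygon_cross_edge_less[OF assms(1-5)] cross_closed_segment by simp
qed

lemma edge_prec_cross_neg: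
  assumes "convex_polygon_cw n v" and "no_parallel_edges n v"
    and "i < n" and "j < n" and "edge_prec n v i j"
  shows "cross (v (nxt n i) - v i) (v (nxt n j) - v j) < 0"
proof -
  define di where "di = v (nxt n i) - v i"
  define dj where "dj = v (nxt n j) - v j"
  obtain t s where "t \<ge> 1" and meet: "v i + t *\<^sub>R di = v j + s *\<^sub>R dj"
    using assms(5) unfolding edge_prec_def di_def dj_def by blast
  have "v i \<in> polygon n v"
    using assms(3) unfolding polygon_def by (simp add: hull_inc)
  then have "cross dj (v i - v j) \<le> 0"
    using polygon_cross_edge_le[OF assms(1,4)] unfolding dj_def by blast
  moreover have "cross dj (v i - v j) + t * cross dj di = cross dj (v i + t *\<^sub>R di - v j)"
    unfolding cross_def by (simp add: algebra_simps)
  moreover have "\<dots> = 0"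
    unfolding meet cross_def by simp
  ultimately have "0 \<le> t * cross dj di"
    by linarith
  then have "0 \<le> cross dj di"
    using \<open>t \<ge> 1\<close> by (simp add: zero_le_mult_iff)
  moreover have "cross dj di \<noteq> 0"
    using assms(2-5) unfolding no_parallel_edges_def edge_prec_def di_def dj_def by blast
  ultimately have "cross dj di > 0"
    by simp
  then show ?thesis
    using cross_skew[of di dj] unfolding di_def dj_def by simp
qed

subsection \<open>Moving corners of a parallelogram\<close>

definition movable_along :: "'a::real_normed_vector set \<Rightarrow> 'a \<Rightarrow> 'a \<Rightarrow> bool" where
  "movable_along S x d \<longleftrightarrow> (\<forall>\<^sub>F t in nhds 0. x + t *\<^sub>R d \<in> S)"

lemma movable_along_open_segment:
  assumes "x \<in> open_segment a b" and "closed_segment a b \<subseteq> S"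
  shows "movable_along S x (b - a)"
proof -
  obtain u where u: "0 < u" "u < 1" "x = (1 - u) *\<^sub>R a + u *\<^sub>R b"
    using assms(1) unfolding in_segment by blast
  have "x + t *\<^sub>R (b - a) \<in> closed_segment a b" if "\<bar>t\<bar> < min u (1 - u)" for t
  proof -
    have "x + t *\<^sub>R (b - a) = (1 - (u + t)) *\<^sub>R a + (u + t) *\<^sub>R b"
      using u(3) by (simp add: algebra_simps)
    moreover have "0 \<le> u + t" "u + t \<le> 1" using that by auto
    ultimately show ?thesis unfolding in_segment by blast
  qed
  then show ?thesis
    unfolding movable_along_def eventually_nhds_metric dist_real_def
    using assms(2) u by (intro exI[of _ "min u (1 - u)"]) auto
qed

lemma movable_along_tendsto:
  "movable_along S x d \<Longrightarrow> (f \<longlongrightarrow> 0) F \<Longrightarrow> \<forall>\<^sub>F t in F. x + f t *\<^sub>R d \<in> S"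
  unfolding movable_along_def by (rule eventually_compose_filterlim)

lemma locally_maximal_eventually_area_le:
  assumes "locally_maximal P A0 A1 A2 A3"
    and "(B0 \<longlongrightarrow> A0) F" "(B1 \<longlongrightarrow> A1) F" "(B2 \<longlongrightarrow> A2) F" "(B3 \<longlongrightarrow> A3) F"
    and "\<forall>\<^sub>F t in F. para_in P (B0 t) (B1 t) (B2 t) (B3 t)"
  shows "\<forall>\<^sub>F t in F. para_area (B0 t) (B1 t) (B2 t) (B3 t) \<le> para_area A0 A1 A2 A3"
proof -
  obtain \<delta> where "\<delta> > 0" and max: "\<And>B0 B1 B2 B3. para_in P B0 B1 B2 B3 \<Longrightarrow>
      dist A0 B0 < \<delta> \<Longrightarrow> dist A1 B1 < \<delta> \<Longrightarrow> dist A2 B2 < \<delta> \<Longrightarrow> dist A3 B3 < \<delta> \<Longrightarrow>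
      para_area B0 B1 B2 B3 \<le> para_area A0 A1 A2 A3"
    using assms(1) unfolding locally_maximal_def by blast
  show ?thesis
    using assms(6) tendstoD[OF assms(2) \<open>\<delta> > 0\<close>] tendstoD[OF assms(3) \<open>\<delta> > 0\<close>]
      tendstoD[OF assms(4) \<open>\<delta> > 0\<close>] tendstoD[OF assms(5) \<open>\<delta> > 0\<close>]
    by eventually_elim (simp add: max dist_commute)
qed

lemma exists_small_quadratic_pos:
  assumes "L \<noteq> 0 \<or> M < (0::real)" and "\<rho> > 0"
  shows "\<exists>l. \<bar>l\<bar> < \<rho> \<and> 0 < l * L - l\<^sup>2 * M"
proof (cases "L = 0")
  case True
  then show ?thesis
    using assms by (intro exI[of _ "\<rho> / 2"]) (simp add: mult_pos_neg)
next
  case False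
  define \<mu> where "\<mu> = min (\<rho> / 2) (\<bar>L\<bar> / (2 * (\<bar>M\<bar> + 1)))"
  have \<mu>: "0 < \<mu>" "\<mu> < \<rho>" "\<mu> \<le> \<bar>L\<bar> / (2 * (\<bar>M\<bar> + 1))"
    using False assms(2) unfolding \<mu>_def by auto
  then have \<mu>M: "\<mu> * (\<bar>M\<bar> + 1) \<le> \<bar>L\<bar> / 2"
    by (simp add: field_simps)
  define l where "l = sgn L * \<mu>"
  have "l\<^sup>2 * M \<le> \<mu> * (\<mu> * \<bar>M\<bar>)"
    unfolding l_def using False \<mu>(1) by (simp add: power2_eq_square sgn_if mult.assoc mult_left_mono)
  also have "\<dots> < \<mu> * \<bar>L\<bar>"
    using \<mu>(1) \<mu>M False by (intro mult_strict_left_mono) (simp_all add: algebra_simps)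
  also have "\<mu> * \<bar>L\<bar> = l * L"
    unfolding l_def by (simp add: abs_sgn mult.commute mult.left_commute sgn_mult_abs)
  finally show ?thesis
    using \<mu> by (intro exI[of _ l]) (simp add: l_def abs_mult)
qed

lemma not_eventually_quadratic_nonpos:
  assumes "L \<noteq> 0 \<or> M < (0::real)"
  shows "\<not> (\<forall>\<^sub>F l in at 0. l * L - l\<^sup>2 * M \<le> 0)"
proof
  assume "\<forall>\<^sub>F l in at 0. l * L - l\<^sup>2 * M \<le> 0"
  then obtain \<rho> where "\<rho> > 0" and nonpos: "\<And>l. l \<noteq> 0 \<Longrightarrow> \<bar>l\<bar> < \<rho> \<Longrightarrow> l * L - l\<^sup>2 * M \<le> 0"
    unfolding eventually_at dist_real_def by auto
  obtain l where "\<bar>l\<bar> < \<rho>" "0 < l * L - l\<^sup>2 * M"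
    using exists_small_quadratic_pos[OF assms \<open>\<rho> > 0\<close>] by blast
  then show False
    using nonpos[of l] by (cases "l = 0") auto
qed

lemma lincomb_neq_0_or_mult_pos:
  fixes X Y p q :: real
  assumes "X < 0" and "0 < Y" and "p \<noteq> 0 \<or> q \<noteq> 0"
  shows "p * X + q * Y \<noteq> 0 \<or> 0 < p * q"
proof (rule disjCI)
  assume "\<not> 0 < p * q"
  then consider "p = 0" "q \<noteq> 0" | "0 < p" "q \<le> 0" | "p < 0" "0 \<le> q"
    using assms(3) by (fastforce simp: zero_less_mult_iff)
  then show "p * X + q * Y \<noteq> 0"
  proof cases
    case 1
    then show ?thesis using assms(2) by simp
  next
    case 2
    then have "p * X < 0" "q * Y \<le> 0"
      using assms(1,2) by (simp_all add: mult_pos_neg mult_nonpos_nonneg)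
    then show ?thesis by linarith
  next
    case 3
    then have "0 < p * X" "0 \<le> q * Y"
      using assms(1,2) by (simp_all add: mult_neg_neg)
    then show ?thesis by linarith
  qed
qed

lemma parallelogram_not_locally_maximal:
  assumes para: "para_in P A0 A1 A2 A3"
    and orient: "cross (A1 - A0) (A3 - A0) < 0" and d31: "cross d3 d1 < 0"
    and X: "cross (A1 - A0) d1 < 0" and Y: "0 < cross d3 (A3 - A0)"
    and "w \<noteq> 0" and move0: "movable_along P A0 w"
    and move1: "movable_along P A1 d1" and move3: "movable_along P A3 d3"
  shows "\<not> locally_maximal P A0 A1 A2 A3"
proof
  assume max: "locally_maximal P A0 A1 A2 A3"
  have "cross d1 d3 \<noteq> 0"
    using d31 cross_skew[of d3 d1] by simp
  then obtain p q where w: "w = p *\<^sub>R d1 + q *\<^sub>R d3"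
    by (rule cross_basis_coordinates)
  with \<open>w \<noteq> 0\<close> have pq: "p \<noteq> 0 \<or> q \<noteq> 0"
    by auto
  define B0 where "B0 l = A0 + l *\<^sub>R w" for l :: real
  define B1 where "B1 l = A1 + (l * p) *\<^sub>R d1" for l :: real
  define B3 where "B3 l = A3 + (l * q) *\<^sub>R d3" for l :: real
  define L where "L = p * cross (A1 - A0) d1 + q * cross d3 (A3 - A0)"
  define M where "M = p * q * cross d3 d1"
  have in_P: "\<forall>\<^sub>F l in at 0. B0 l \<in> P" "\<forall>\<^sub>F l in at 0. B1 l \<in> P" "\<forall>\<^sub>F l in at 0. B3 l \<in> P"
    unfolding B0_def B1_def B3_def using move0 move1 move3
    by (auto intro!: movable_along_tendsto tendsto_eq_intros)
  have parB: "B0 l + A2 = B1 l + B3 l" for l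
    using para unfolding para_in_def is_parallelogram_def B0_def B1_def B3_def w
    by (simp add: algebra_simps)
  from in_P have "\<forall>\<^sub>F l in at 0. para_in P (B0 l) (B1 l) A2 (B3 l)"
    by eventually_elim (use parB para in \<open>simp add: para_in_def is_parallelogram_def\<close>)
  moreover have "(B0 \<longlongrightarrow> A0) (at 0)" "(B1 \<longlongrightarrow> A1) (at 0)" "(B3 \<longlongrightarrow> A3) (at 0)"
    unfolding B0_def B1_def B3_def by (auto intro!: tendsto_eq_intros)
  ultimately have "\<forall>\<^sub>F l in at 0. para_area (B0 l) (B1 l) A2 (B3 l) \<le> para_area A0 A1 A2 A3"
    using locally_maximal_eventually_area_le[OF max _ _ tendsto_const] by blast
  moreover have "cross (B1 l - B0 l) (B3 l - B0 l) = cross (A1 - A0) (A3 - A0) - (l * L - l\<^sup>2 * M)" for l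
  proof -
    have sides: "B1 l - B0 l = (A1 - A0) - (l * q) *\<^sub>R d3" "B3 l - B0 l = (A3 - A0) - (l * p) *\<^sub>R d1"
      unfolding B0_def B1_def B3_def w by (simp_all add: algebra_simps)
    show ?thesis
      unfolding sides cross_diff_scaleR L_def M_def by (simp add: algebra_simps power2_eq_square)
  qed
  ultimately have "\<forall>\<^sub>F l in at 0. l * L - l\<^sup>2 * M \<le> 0"
    using orient by (auto simp: para_area_def elim!: eventually_mono)
  moreover have "L \<noteq> 0 \<or> M < 0"
    using lincomb_neq_0_or_mult_pos[OF X Y pq] d31 unfolding L_def M_def by (auto simp: mult_pos_neg)
  ultimately show False
    using not_eventually_quadratic_nonpos by blast
qed

lemma movable_along_edge:
  assumes "convex_polygon_cw n v" and "k < n" and "x \<in> edge n v k"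
  shows "movable_along (polygon n v) x (v (nxt n k) - v k)"
  using movable_along_open_segment closed_segment_edge_subset_polygon assms
  unfolding edge_def by blast

lemma movable_along_polygon:
  assumes "x \<in> polygon n v" and "x \<notin> v ` {..<n}"
  obtains w where "w \<noteq> 0" "movable_along (polygon n v) x w"
proof -
  obtain a b where "a \<in> polygon n v" "b \<in> polygon n v" "x \<in> open_segment a b"
    using assms extreme_point_of_convex_hull[of x "v ` {..<n}"]
    unfolding polygon_def extreme_point_of_def by blast
  moreover have "convex (polygon n v)"
    unfolding polygon_def by simp
  ultimately show ?thesis
    using that[of "b - a"] movable_along_open_segment closed_segment_subset
    by (metis eq_iff_diff_eq_0 open_segment_idem empty_iff)
qed

lemma not_slidable_edge:
  assumes "\<not> slidable n v A0 A1 A2 A3" and "k < n" and "a < 4" and "b < 4" and "a \<noteq> b"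
    and "[A0, A1, A2, A3] ! a \<in> edge n v k"
  shows "[A0, A1, A2, A3] ! b \<notin> edge n v k"
  using assms unfolding slidable_def Let_def by blast

theorem lemma10:
  fixes n :: nat and v :: "nat \<Rightarrow> real^2" and A0 A1 A2 A3 :: "real^2" and i j :: nat
  assumes "convex_polygon_cw n v"
    and "no_parallel_edges n v"
    and "LMAP n v A0 A1 A2 A3"
    and "clockwise4 A0 A1 A2 A3"
    and "i < n" and "j < n"
    and "A3 \<in> edge n v i" and "A1 \<in> edge n v j"
    and "edge_prec n v i j"
  shows "\<exists>k<n. A0 = v k"
proof (rule ccontr)
  assume "\<not> (\<exists>k<n. A0 = v k)"
  then have not_vertex: "A0 \<notin> v ` {..<n}" by blast
  define P where "P = polygon n v"
  define di where "di = v (nxt n i) - v i"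
  define dj where "dj = v (nxt n j) - v j"
  have max: "locally_maximal P A0 A1 A2 A3" and "\<not> slidable n v A0 A1 A2 A3"
    using assms(3) unfolding LMAP_def P_def by auto
  then have para: "para_in P A0 A1 A2 A3" and "A0 \<notin> edge n v i" "A0 \<notin> edge n v j"
    using not_slidable_edge[of n v A0 A1 A2 A3 i 3 0] not_slidable_edge[of n v A0 A1 A2 A3 j 1 0]
      assms(5-8) unfolding locally_maximal_def by auto
  then have X: "cross (A1 - A0) dj < 0" and "cross (A3 - A0) di < 0"
    using polygon_cross_edge_point_less[OF assms(1) _ _ _ not_vertex] assms(5-8)
    unfolding para_in_def P_def di_def dj_def by auto
  then have Y: "0 < cross di (A3 - A0)"
    using cross_skew[of di] by simp
  have orient: "cross (A1 - A0) (A3 - A0) < 0"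
    using assms(4) unfolding clockwise4_def cross_def by (simp add: algebra_simps)
  have dij: "cross di dj < 0"
    using edge_prec_cross_neg[OF assms(1,2,5,6,9)] unfolding di_def dj_def .
  obtain w where "w \<noteq> 0" and "movable_along P A0 w"
    using movable_along_polygon para not_vertex unfolding para_in_def P_def by metis
  moreover have "movable_along P A1 dj" "movable_along P A3 di"
    using movable_along_edge assms(1,5-8) unfolding P_def di_def dj_def by blast+
  ultimately have "\<not> locally_maximal P A0 A1 A2 A3"
    using parallelogram_not_locally_maximal[OF para orient dij X Y] by blast
  with max show False
    by contradiction
qed

end
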